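(* Let $Z=(X,Y)\in G_m(1)$. Then for every transition function $\varphi$ there exists $\epsilon_0>0$ such that for all $0<\epsilon\le\epsilon_0$ all singular points of $\mathcal P(Z)_\epsilon$ in $S^2$ are hyperbolic.
   Context: Fix $m\ge1$. $\chi_m$ is the space of real polynomial vector fields $X=P\partial_x+Q\partial_y$ on $\mathbb R^2$ with $\deg P,\deg Q\le m$, identified with coefficient vectors in $\mathbb R^{(m+1)(m+2)}$; $\deg X=\max\{\deg P,\deg Q\}$. Let $f(x,y)=y$, $D=\{y=0\}$, $N=\{y>0\}$, $S=\{y<0\}$. $\Omega_m$ is the set of pairs $Z=(X,Y)$, $X,Y\in\chi_m$ of degree exactly $m$, regarded as the discontinuous vector field equal to $X$ on $\{y\ge0\}$ and $Y$ on $\{y\le0\}$. For $X\in\chi_m$, $\mathcal P(X)$ is the unique analytic vector field tangent to $S^2=\{x^2+y^2+z^2=1\}$ whose restriction to $S^2_+=\{z>0\}$ is $z^{m-1}\wp^*(X)$, $\wp(u,v)=(u,v,1)/\sqrt{u^2+v^2+1}$; $S^1=\{z=0\}$ is invariant. $\mathcal P(Z)=(\mathcal P(X),\mathcal P(Y))$ is the discontinuous field on the sphere equal to $\mathcal P(X)$ where $y\ge0$, $\mathcal P(Y)$ where $y\le0$, with $f(x,y,z)=y$, $D=\{y=0\}$, $N=\{y>0\}$, $S=\{y<0\}$. A transition function is a $C^\infty$ $\varphi:\mathbb R\to\mathbb R$ with $\varphi=0$ on $(-\infty,-1]$, $\varphi=1$ on $[1,\infty)$, $\varphi'>0$ on $(-1,1)$.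 $\mathcal P(Z)_\epsilon(q)=(1-\varphi_\epsilon(f(q)))\mathcal P(Y)(q)+\varphi_\epsilon(f(q))\mathcal P(X)(q)$, $\varphi_\epsilon(t)=\varphi(t/\epsilon)$. For a discontinuous field $(U,V)$ write $Uf=\langle\nabla f,U\rangle$, $U^2f=U(Uf)$. Escaping arc: $Uf>0,Vf<0$; sliding arc: $Uf<0,Vf>0$; on these the Filippov vector field $F(p)$ is the vector in the cone spanned by $U(p),V(p)$ tangent to $D$. A fold point is $p\in D$ with $Vf(p)\neq0,Uf(p)=0,U^2f(p)\neq0$ or $Uf(p)\neq0,Vf(p)=0,V^2f(p)\neq0$. A hyperbolic singular point of $F$ is $p\in D$ with $Uf(p)Vf(p)<0$, $\det[U,V](p)=0$ and nonzero derivative at $p$ of $\det[U,V]|_D$. A $D$-singularity is a point of $D$ that is not $D$-regular ($p$ is $D$-regular if $Uf(p)Vf(p)>0$, or $Uf(p)Vf(p)<0$ and $\det[U,V](p)\neq0$); it is elementary if it is a fold point or a hyperbolic singular point of $F$. $\mathcal S_m$ is the set of $X\in\chi_m$ such that $\mathcal P(X)$ has all singular points hyperbolic, all periodic orbits hyperbolic, and no saddle connections in $S^2$ except those contained in $S^1$; "$X|_N\in\mathcal S_m$" (resp. "$Y|_S\in\mathcal S_m$") means these three conditions hold for $\mathcal P(X)$ restricted to $N$ (resp. $\mathcal P(Y)$ restricted to $S$). $G_m(1)$ is the set of $Z=(X,Y)\in\Omega_m$ with $X|_N,Y|_S\in\mathcal S_m$ and every $D$-singularity of $\mathcal P(Z)=(U,V)$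 elementary. *)

theory Defs
  imports "HOL-Analysis.Analysis"
begin

type_synonym poly2 = "nat \<Rightarrow> nat \<Rightarrow> real"
  (* a i j is the coefficient of x^i y^j *)

type_synonym pvf = "poly2 \<times> poly2"
  (* X = P d/dx + Q d/dy, X = (coefficients of P, coefficients of Q) *)

definition in_chi :: "nat \<Rightarrow> pvf \<Rightarrow> bool" where
  "in_chi m X \<longleftrightarrow> (\<forall>i j. m < i + j \<longrightarrow> fst X i j = 0 \<and> snd X i j = 0)"

definition deg_exactly :: "nat \<Rightarrow> pvf \<Rightarrow> bool" where
  "deg_exactly m X \<longleftrightarrow> in_chi m X \<and>
     (\<exists>i j. i + j = m \<and> (fst X i j \<noteq> 0 \<or> snd X i j \<noteq> 0))"

text \<open>Homogenisation of degree m: z^m P(x/z, y/z).\<close>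
definition hom :: "nat \<Rightarrow> poly2 \<Rightarrow> real^3 \<Rightarrow> real" where
  "hom m a q = (\<Sum>i\<le>m. \<Sum>j\<le>m - i. a i j * (q$1)^i * (q$2)^j * (q$3)^(m - i - j))"

text \<open>Poincare compactification: the polynomial (hence analytic) vector field on R^3,
  tangent to S^2, whose restriction to z>0 equals z^(m-1) times the pullback of X.\<close>
definition poinc :: "nat \<Rightarrow> pvf \<Rightarrow> real^3 \<Rightarrow> real^3" where
  "poinc m X q = vector [hom m (fst X) q, hom m (snd X) q, 0]
       - (q$1 * hom m (fst X) q + q$2 * hom m (snd X) q) *\<^sub>R q"

definition S2 :: "(real^3) set" where "S2 = {q. norm q = 1}"
definition Nset :: "(real^3) set" where "Nset = {q. q$2 > 0}"
definition Sset :: "(real^3) set" where "Sset = {q. q$2 < 0}"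
definition Dset :: "(real^3) set" where "Dset = {q. q$2 = 0}"

definition tang :: "real^3 \<Rightarrow> (real^3) set" where
  "tang p = {w. w \<bullet> p = 0}"

text \<open>Singular point p in S^2 is hyperbolic: the linearisation on the tangent plane has
  no eigenvalue i*mu (mu real, incl. 0); complex eigenvector written as w1 + i w2.\<close>
definition hyp_sing :: "(real^3 \<Rightarrow> real^3) \<Rightarrow> real^3 \<Rightarrow> bool" where
  "hyp_sing V p \<longleftrightarrow> V p = 0 \<and> V differentiable (at p) \<and>
     \<not> (\<exists>\<mu> w1 w2. w1 \<in> tang p \<and> w2 \<in> tang p \<and> (w1 \<noteq> 0 \<or> w2 \<noteq> 0) \<and>
          frechet_derivative V (at p) w1 = (- \<mu>) *\<^sub>R w2 \<and>
          frechet_derivative V (at p) w2 = \<mu> *\<^sub>R w1)"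

definition saddle :: "(real^3 \<Rightarrow> real^3) \<Rightarrow> real^3 \<Rightarrow> bool" where
  "saddle V p \<longleftrightarrow> V p = 0 \<and> V differentiable (at p) \<and>
     (\<exists>w1 w2 l1 l2. w1 \<in> tang p \<and> w2 \<in> tang p \<and> w1 \<noteq> 0 \<and> w2 \<noteq> 0 \<and>
        l1 < 0 \<and> 0 < l2 \<and>
        frechet_derivative V (at p) w1 = l1 *\<^sub>R w1 \<and>
        frechet_derivative V (at p) w2 = l2 *\<^sub>R w2)"

definition is_sol :: "(real^3 \<Rightarrow> real^3) \<Rightarrow> (real \<Rightarrow> real^3) \<Rightarrow> bool" where
  "is_sol V \<gamma> \<longleftrightarrow> (\<forall>t. (\<gamma> has_vector_derivative V (\<gamma> t)) (at t))"

text \<open>Periodic orbit through gamma(0) with period T is hyperbolic: the monodromy of the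
  variational equation, acting on T_{gamma 0} S^2 modulo the flow direction, has its
  nontrivial multiplier lambda with |lambda| \<noteq> 1 (lambda real), i.e. lambda \<noteq> 1, -1.\<close>
definition hyp_periodic :: "(real^3 \<Rightarrow> real^3) \<Rightarrow> (real \<Rightarrow> real^3) \<Rightarrow> real \<Rightarrow> bool" where
  "hyp_periodic V \<gamma> T \<longleftrightarrow>
     (\<forall>w W. w \<in> tang (\<gamma> 0) \<and> W 0 = w \<and>
        (\<forall>t. (W has_vector_derivative frechet_derivative V (at (\<gamma> t)) (W t)) (at t))
        \<longrightarrow> (\<exists>c. w = c *\<^sub>R V (\<gamma> 0)) \<or>
            (\<forall>c. W T \<noteq> w + c *\<^sub>R V (\<gamma> 0) \<and> W T \<noteq> - w + c *\<^sub>R V (\<gamma> 0)))"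

definition Sm_cond :: "(real^3 \<Rightarrow> real^3) \<Rightarrow> (real^3) set \<Rightarrow> bool" where
  "Sm_cond V A \<longleftrightarrow>
     (\<forall>p \<in> S2 \<inter> A. V p = 0 \<longrightarrow> hyp_sing V p) \<and>
     (\<forall>\<gamma> T. is_sol V \<gamma> \<and> (\<forall>t. \<gamma> t \<in> S2 \<inter> A) \<and> T > 0 \<and> (\<forall>t. \<gamma> (t + T) = \<gamma> t)
          \<and> V (\<gamma> 0) \<noteq> 0 \<longrightarrow> hyp_periodic V \<gamma> T) \<and>
     (\<forall>\<gamma> s1 s2. is_sol V \<gamma> \<and> (\<forall>t. \<gamma> t \<in> S2 \<inter> A) \<and> V (\<gamma> 0) \<noteq> 0 \<and>
          (\<gamma> \<longlongrightarrow> s1) at_bot \<and> (\<gamma> \<longlongrightarrow> s2) at_top \<and>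
          s1 \<in> S2 \<inter> A \<and> s2 \<in> S2 \<inter> A \<and> saddle V s1 \<and> saddle V s2
          \<longrightarrow> (\<forall>t. \<gamma> t $ 3 = 0))"

definition Uf :: "(real^3 \<Rightarrow> real^3) \<Rightarrow> real^3 \<Rightarrow> real" where
  "Uf U q = U q $ 2"   (* <grad f, U>, f = y *)

definition U2f :: "(real^3 \<Rightarrow> real^3) \<Rightarrow> real^3 \<Rightarrow> real" where
  "U2f U q = frechet_derivative (Uf U) (at q) (U q)"

text \<open>det[U,V] on the tangent plane of S^2 at q (oriented by the outward normal q).\<close>
definition detUV :: "(real^3 \<Rightarrow> real^3) \<Rightarrow> (real^3 \<Rightarrow> real^3) \<Rightarrow> real^3 \<Rightarrow> real" where
  "detUV U V q = (let u = U q; v = V q in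
      q$1 * (u$2 * v$3 - u$3 * v$2) - q$2 * (u$1 * v$3 - u$3 * v$1)
      + q$3 * (u$1 * v$2 - u$2 * v$1))"

text \<open>Tangent direction of the circle D \<inter> S^2 at p.\<close>
definition dirD :: "real^3 \<Rightarrow> real^3" where
  "dirD p = vector [p$3, 0, - p$1]"

definition fold_pt :: "(real^3 \<Rightarrow> real^3) \<Rightarrow> (real^3 \<Rightarrow> real^3) \<Rightarrow> real^3 \<Rightarrow> bool" where
  "fold_pt U V p \<longleftrightarrow> p \<in> S2 \<inter> Dset \<and>
     ((Uf V p \<noteq> 0 \<and> Uf U p = 0 \<and> U2f U p \<noteq> 0) \<or>
      (Uf U p \<noteq> 0 \<and> Uf V p = 0 \<and> U2f V p \<noteq> 0))"

definition hypF_pt :: "(real^3 \<Rightarrow> real^3) \<Rightarrow> (real^3 \<Rightarrow> real^3) \<Rightarrow> real^3 \<Rightarrow> bool" where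
  "hypF_pt U V p \<longleftrightarrow> p \<in> S2 \<inter> Dset \<and> Uf U p * Uf V p < 0 \<and> detUV U V p = 0 \<and>
     frechet_derivative (detUV U V) (at p) (dirD p) \<noteq> 0"

definition D_regular :: "(real^3 \<Rightarrow> real^3) \<Rightarrow> (real^3 \<Rightarrow> real^3) \<Rightarrow> real^3 \<Rightarrow> bool" where
  "D_regular U V p \<longleftrightarrow> Uf U p * Uf V p > 0 \<or> (Uf U p * Uf V p < 0 \<and> detUV U V p \<noteq> 0)"

definition D_sing :: "(real^3 \<Rightarrow> real^3) \<Rightarrow> (real^3 \<Rightarrow> real^3) \<Rightarrow> real^3 \<Rightarrow> bool" where
  "D_sing U V p \<longleftrightarrow> p \<in> S2 \<inter> Dset \<and> \<not> D_regular U V p"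

definition Gm1 :: "nat \<Rightarrow> pvf \<Rightarrow> pvf \<Rightarrow> bool" where
  "Gm1 m X Y \<longleftrightarrow> deg_exactly m X \<and> deg_exactly m Y \<and>
     Sm_cond (poinc m X) Nset \<and> Sm_cond (poinc m Y) Sset \<and>
     (\<forall>p. D_sing (poinc m X) (poinc m Y) p \<longrightarrow>
            fold_pt (poinc m X) (poinc m Y) p \<or> hypF_pt (poinc m X) (poinc m Y) p)"

definition smooth_real :: "(real \<Rightarrow> real) \<Rightarrow> bool" where
  "smooth_real \<phi> \<longleftrightarrow> (\<exists>d. d 0 = \<phi> \<and> (\<forall>n x. (d n has_real_derivative d (Suc n) x) (at x)))"

definition transition_fun :: "(real \<Rightarrow> real) \<Rightarrow> bool" where
  "transition_fun \<phi> \<longleftrightarrow> smooth_real \<phi> \<and> (\<forall>t. t \<le> -1 \<longrightarrow> \<phi> t = 0) \<and>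
     (\<forall>t. 1 \<le> t \<longrightarrow> \<phi> t = 1) \<and> (\<forall>t. -1 < t \<and> t < 1 \<longrightarrow> deriv \<phi> t > 0)"

definition reg_field :: "nat \<Rightarrow> (real \<Rightarrow> real) \<Rightarrow> real \<Rightarrow> pvf \<Rightarrow> pvf \<Rightarrow> real^3 \<Rightarrow> real^3" where
  "reg_field m \<phi> \<epsilon> X Y q =
     (1 - \<phi> (q$2 / \<epsilon>)) *\<^sub>R poinc m Y q + \<phi> (q$2 / \<epsilon>) *\<^sub>R poinc m X q"

end

theory Submission
  imports Defs
begin

text \<open>
  Outside the strip \<open>|y| < \<epsilon>\<close> the regularised field coincides, together with its derivative,
  with \<open>\<P>(X)\<close> or \<open>\<P>(Y)\<close>, whose singular points are hyperbolic by the \<open>S\<^sub>m\<close> conditions.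
  Inside the strip we argue by contradiction: a sequence of non-hyperbolic zeros \<open>q\<^sub>n\<close> for
  \<open>\<epsilon>\<^sub>n \<rightarrow> 0\<close> accumulates (after rescaling \<open>t\<^sub>n = y(q\<^sub>n)/\<epsilon>\<^sub>n\<close>) at a point \<open>p \<in> D\<close> where the
  convex combination \<open>(1 - \<phi>(t\<^sub>0))\<P>(Y) + \<phi>(t\<^sub>0)\<P>(X)\<close> vanishes, i.e. at an equilibrium of the
  Filippov sliding field; by \<open>G\<^sub>m(1)\<close> it is a hyperbolic singular point of \<open>F\<close>.  The derivative
  of the regularised field at \<open>q\<^sub>n\<close> is a bounded part plus a rank-one part of size
  \<open>k\<^sub>n = \<phi>'(t\<^sub>n)/\<epsilon>\<^sub>n \<rightarrow> \<infinity>\<close>; dividing trace and determinant on the tangent plane by \<open>k\<^sub>n\<close>, they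
  converge to the transversal jump \<open>(X - Y)\<^sub>y(p) \<noteq> 0\<close> and to (minus) the derivative of
  \<open>det[U, V]\<close> along \<open>D\<close>, which is nonzero by hyperbolicity of the sliding equilibrium.
  A non-hyperbolic linearisation has zero trace or zero determinant, a contradiction.
\<close>

lemma transition_fun_deriv:
  assumes "transition_fun \<phi>"
  shows "(\<phi> has_real_derivative deriv \<phi> x) (at x)" and "isCont (deriv \<phi>) x"
proof -
  obtain d where d0: "d 0 = \<phi>" and dd: "\<And>n x. (d n has_real_derivative d (Suc n) x) (at x)"
    using assms unfolding transition_fun_def smooth_real_def by blast
  have d1: "deriv \<phi> = d 1"
    using dd[of 0] d0 DERIV_imp_deriv by fastforce
  show "(\<phi> has_real_derivative deriv \<phi> x) (at x)"
    using dd[of 0] d0 d1 by simp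
  show "isCont (deriv \<phi>) x"
    using dd[of 1] DERIV_isCont d1 by (metis One_nat_def)
qed

text \<open>Since \<open>\<phi>\<close> is constant off \<open>(-1, 1)\<close>, its derivative vanishes there, including at \<open>\<plusminus>1\<close>
  by continuity of the derivative.\<close>
lemma transition_fun_deriv_outside:
  assumes \<phi>: "transition_fun \<phi>" and t: "1 \<le> \<bar>t\<bar>"
  shows "deriv \<phi> t = 0"
proof -
  let ?Z = "{x. deriv \<phi> x = 0}"
  have closed: "closed ?Z"
    using transition_fun_deriv(2)[OF \<phi>]
    by (intro closed_Collect_eq continuous_at_imp_continuous_on) auto
  have open_part: "{1<..} \<union> {..<-1} \<subseteq> ?Z"
  proof
    fix x :: real assume x: "x \<in> {1<..} \<union> {..<-1}"
    have const: "\<phi> x = \<phi> y" if "\<bar>x - y\<bar> < \<bar>x\<bar> - 1" for y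
      using x that \<phi> unfolding transition_fun_def by (auto simp: abs_if split: if_splits)
    show "x \<in> ?Z"
      using DERIV_local_const[OF transition_fun_deriv(1)[OF \<phi>, of x], of "\<bar>x\<bar> - 1"] x const
      by auto
  qed
  have "closure ({1<..} \<union> {..<-1}) \<subseteq> ?Z"
    by (rule closure_minimal[OF open_part closed])
  then show ?thesis using t by (auto simp: abs_if split: if_splits)
qed

text \<open>Strict monotonicity on \<open>[-1, 1]\<close> places the values inside the strip strictly between 0 and 1.\<close>
lemma transition_fun_inside:
  assumes \<phi>: "transition_fun \<phi>" and t: "-1 < t" "t < 1"
  shows "0 < \<phi> t \<and> \<phi> t < 1"
proof -
  have incr: "\<phi> a < \<phi> b" if "-1 \<le> a" "a < b" "b \<le> 1" for a b
  proof (rule DERIV_pos_imp_increasing_open[OF \<open>a < b\<close>])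
    show "\<exists>y. (\<phi> has_real_derivative y) (at x) \<and> 0 < y" if "a < x" "x < b" for x
      using transition_fun_deriv(1)[OF \<phi>] \<phi> that \<open>-1 \<le> a\<close> \<open>b \<le> 1\<close>
      unfolding transition_fun_def by (meson le_less_trans less_le_trans)
    show "continuous_on {a..b} \<phi>"
      using transition_fun_deriv(1)[OF \<phi>] DERIV_isCont continuous_at_imp_continuous_on by blast
  qed
  have "\<phi> (-1) = 0" "\<phi> 1 = 1" using \<phi> unfolding transition_fun_def by auto
  then show ?thesis using incr[of "-1" t] incr[of t 1] t by auto
qed

section \<open>Calculus of the Poincare compactification\<close>

lemma has_derivative_component:
  "((\<lambda>q::real^3. q$i) has_derivative (\<lambda>h. h$i)) F"
  by (rule bounded_linear_imp_has_derivative[OF bounded_linear_vec_nth])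

definition dmono :: "nat \<Rightarrow> nat \<Rightarrow> nat \<Rightarrow> real^3 \<Rightarrow> real^3 \<Rightarrow> real" where
  "dmono i j k q h = of_nat i * h$1 * (q$1)^(i-1) * (q$2)^j * (q$3)^k
    + (q$1)^i * (of_nat j * h$2 * (q$2)^(j-1)) * (q$3)^k
    + (q$1)^i * (q$2)^j * (of_nat k * h$3 * (q$3)^(k-1))"

lemma mono_deriv:
  "((\<lambda>q::real^3. (q$1)^i * (q$2)^j * (q$3)^k) has_derivative dmono i j k q) (at q)"
  unfolding dmono_def
  by (rule derivative_eq_intros has_derivative_component refl | simp add: algebra_simps)+

definition dhom :: "nat \<Rightarrow> poly2 \<Rightarrow> real^3 \<Rightarrow> real^3 \<Rightarrow> real" where
  "dhom m a q h = (\<Sum>i\<le>m. \<Sum>j\<le>m - i. a i j * dmono i j (m-i-j) q h)"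

lemma hom_deriv: "(hom m a has_derivative dhom m a q) (at q)"
proof -
  have "hom m a = (\<lambda>q. \<Sum>i\<le>m. \<Sum>j\<le>m - i. a i j * ((q$1)^i * (q$2)^j * (q$3)^(m-i-j)))"
    by (rule ext) (simp add: hom_def mult.assoc)
  then show ?thesis unfolding dhom_def
    by (simp only:) (intro has_derivative_sum has_derivative_mult_right mono_deriv)
qed

lemma hom_tendsto: "(Q \<longlongrightarrow> p) F \<Longrightarrow> ((\<lambda>n. hom m a (Q n)) \<longlongrightarrow> hom m a p) F"
  unfolding hom_def by (intro tendsto_intros)

lemma dhom_tendsto:
  "(Q \<longlongrightarrow> p) F \<Longrightarrow> (H \<longlongrightarrow> h) F \<Longrightarrow> ((\<lambda>n. dhom m a (Q n) (H n)) \<longlongrightarrow> dhom m a p h) F"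
  unfolding dhom_def dmono_def by (intro tendsto_intros)

text \<open>The compactified field \<open>\<P>(X)(q) = (P, Q, 0) - (x P + y Q) q\<close>, written without \<open>vector\<close> literals
  in the coefficients so that the derivative rules apply.\<close>
lemma poinc_alt:
  "poinc m X q = hom m (fst X) q *\<^sub>R vector [1,0,0] + hom m (snd X) q *\<^sub>R vector [0,1,0]
     - (q$1 * hom m (fst X) q + q$2 * hom m (snd X) q) *\<^sub>R q"
  unfolding poinc_def by (simp add: vec_eq_iff forall_3)

definition dpoinc :: "nat \<Rightarrow> pvf \<Rightarrow> real^3 \<Rightarrow> real^3 \<Rightarrow> real^3" where
  "dpoinc m X q h = dhom m (fst X) q h *\<^sub>R vector [1,0,0] + dhom m (snd X) q h *\<^sub>R vector [0,1,0]
     - (h$1 * hom m (fst X) q + q$1 * dhom m (fst X) q h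
        + h$2 * hom m (snd X) q + q$2 * dhom m (snd X) q h) *\<^sub>R q
     - (q$1 * hom m (fst X) q + q$2 * hom m (snd X) q) *\<^sub>R h"

lemma poinc_deriv: "(poinc m X has_derivative dpoinc m X q) (at q)"
proof -
  have "poinc m X = (\<lambda>q. hom m (fst X) q *\<^sub>R vector [1,0,0] + hom m (snd X) q *\<^sub>R vector [0,1,0]
     - (q$1 * hom m (fst X) q + q$2 * hom m (snd X) q) *\<^sub>R q)"
    by (rule ext) (rule poinc_alt)
  then show ?thesis unfolding dpoinc_def
    by (simp only:)
       (rule derivative_eq_intros has_derivative_component hom_deriv refl | simp add: algebra_simps)+
qed

lemma poinc_tendsto: "(Q \<longlongrightarrow> p) F \<Longrightarrow> ((\<lambda>n. poinc m X (Q n)) \<longlongrightarrow> poinc m X p) F"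
  unfolding poinc_alt by (intro tendsto_intros hom_tendsto)

lemma dpoinc_tendsto:
  "(Q \<longlongrightarrow> p) F \<Longrightarrow> (H \<longlongrightarrow> h) F \<Longrightarrow> ((\<lambda>n. dpoinc m X (Q n) (H n)) \<longlongrightarrow> dpoinc m X p h) F"
  unfolding dpoinc_def by (intro tendsto_intros dhom_tendsto hom_tendsto)

text \<open>At a singular point \<open>p\<close> of \<open>\<P>(X)\<close> the second Lie derivative \<open>X\<^sup>2f(p) = D(Xf)(p) X(p)\<close> vanishes,
  so a singular point is never a fold point.\<close>
lemma U2f_zero_at_singularity:
  assumes "poinc m X p = 0"
  shows "U2f (poinc m X) p = 0"
proof -
  have "(Uf (poinc m X) has_derivative (\<lambda>h. dpoinc m X p h $ 2)) (at p)"
    using bounded_linear.has_derivative[OF bounded_linear_vec_nth poinc_deriv]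
    by (simp add: Uf_def[abs_def])
  then have "U2f (poinc m X) p = dpoinc m X p (poinc m X p) $ 2"
    unfolding U2f_def by (metis frechet_derivative_at)
  also have "\<dots> = 0"
    using assms linear_0[OF has_derivative_linear[OF poinc_deriv]] by simp
  finally show ?thesis .
qed

text \<open>Derivative of \<open>det[U, V](q)\<close> (the triple product \<open>q \<cdot> (U(q) \<times> V(q))\<close>) in direction \<open>h\<close>, where
  \<open>u, v\<close> are the values and \<open>du, dv\<close> the directional derivatives of \<open>U, V\<close>.\<close>
definition ddet :: "real^3 \<Rightarrow> real^3 \<Rightarrow> real^3 \<Rightarrow> real^3 \<Rightarrow> real^3 \<Rightarrow> real^3 \<Rightarrow> real" where
  "ddet q h u v du dv =
     h$1*(u$2* v$3 - u$3* v$2) + q$1*(du$2* v$3 + u$2*dv$3 - du$3* v$2 - u$3*dv$2)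
   - (h$2*(u$1* v$3 - u$3* v$1) + q$2*(du$1* v$3 + u$1*dv$3 - du$3* v$1 - u$3*dv$1))
   + (h$3*(u$1* v$2 - u$2* v$1) + q$3*(du$1* v$2 + u$1*dv$2 - du$2* v$1 - u$2*dv$1))"

lemma det_deriv:
  "(detUV (poinc m X) (poinc m Y) has_derivative
     (\<lambda>h. ddet q h (poinc m X q) (poinc m Y q) (dpoinc m X q h) (dpoinc m Y q h))) (at q)"
proof -
  have comp: "((\<lambda>q. poinc m X q $ i) has_derivative (\<lambda>h. dpoinc m X q h $ i)) (at q)" for i X
    by (rule bounded_linear.has_derivative[OF bounded_linear_vec_nth poinc_deriv])
  have "detUV (poinc m X) (poinc m Y) = (\<lambda>q.
        q$1 * (poinc m X q$2 * poinc m Y q$3 - poinc m X q$3 * poinc m Y q$2)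
      - q$2 * (poinc m X q$1 * poinc m Y q$3 - poinc m X q$3 * poinc m Y q$1)
      + q$3 * (poinc m X q$1 * poinc m Y q$2 - poinc m X q$2 * poinc m Y q$1))"
    by (rule ext) (simp add: detUV_def Let_def)
  then show ?thesis unfolding ddet_def
    by (simp only:)
       (rule derivative_eq_intros has_derivative_component comp refl | simp add: algebra_simps)+
qed

section \<open>Linear algebra on the tangent plane of the sphere\<close>

lemma inner3: "(x::real^3) \<bullet> y = x$1*y$1 + x$2*y$2 + x$3*y$3"
  by (simp add: inner_vec_def sum_3)

lemma norm3_eq_1: "norm (x::real^3) = 1 \<longleftrightarrow> x$1^2 + x$2^2 + x$3^2 = 1"
  by (simp add: norm_eq_sqrt_inner inner3 power2_eq_square)

lemma vec3_eq_iff: "(x::real^3) = y \<longleftrightarrow> x$1 = y$1 \<and> x$2 = y$2 \<and> x$3 = y$3"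
  by (simp add: vec_eq_iff forall_3)

lemma imaginary_eigenvalue_2x2:
  fixes a b c d x1 y1 x2 y2 \<nu> :: real
  assumes e1: "a*x1 + b*y1 = -\<nu>*x2" and e2: "c*x1 + d*y1 = -\<nu>*y2"
    and e3: "a*x2 + b*y2 = \<nu>*x1" and e4: "c*x2 + d*y2 = \<nu>*y1"
    and nz: "x1 \<noteq> 0 \<or> y1 \<noteq> 0 \<or> x2 \<noteq> 0 \<or> y2 \<noteq> 0"
  shows "a*d - b*c = 0 \<or> a + d = 0"
proof -
  define t where "t = a + d"
  define \<delta> where "\<delta> = \<nu>^2 - (a*d - b*c)"
  have f1: "\<nu>*t*x2 = \<delta>*x1" and f2: "\<nu>*t*x1 = -\<delta>*x2"
    and f3: "\<nu>*t*y2 = \<delta>*y1" and f4: "\<nu>*t*y1 = -\<delta>*y2"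
    unfolding t_def \<delta>_def using e1 e2 e3 e4 by algebra+
  have "((\<nu>*t)^2 + \<delta>^2) * x1 = 0" "((\<nu>*t)^2 + \<delta>^2) * x2 = 0"
    using f1 f2 by algebra+
  moreover have "((\<nu>*t)^2 + \<delta>^2) * y1 = 0" "((\<nu>*t)^2 + \<delta>^2) * y2 = 0"
    using f3 f4 by algebra+
  ultimately have "(\<nu>*t)^2 + \<delta>^2 = 0" using nz by auto
  then have "\<nu>*t = 0" "\<delta> = 0" by (simp_all add: sum_power2_eq_zero_iff)
  then show ?thesis unfolding t_def \<delta>_def by (auto simp: power2_eq_square)
qed

text \<open>At \<open>q \<in> S\<^sup>2\<close> with \<open>|y| < 1\<close> the tangent plane has the frame \<open>dirD q\<close> (tangent to the circle
  \<open>y = const\<close>) and \<open>tgD q\<close>, the tangential projection of \<open>\<nabla>y\<close>; the dual coordinates are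
  \<open>h \<cdot> dirD q\<close> and \<open>h\<^sub>y\<close>, up to the common factor \<open>1 - y\<^sup>2\<close>.\<close>
definition tgD :: "real^3 \<Rightarrow> real^3" where
  "tgD q = vector [0,1,0] - (q$2) *\<^sub>R q"

lemma tangent_frame_decomp:
  assumes "q \<in> S2" "h \<in> tang q"
  shows "(1 - (q$2)^2) *\<^sub>R h = (h \<bullet> dirD q) *\<^sub>R dirD q + (h$2) *\<^sub>R tgD q"
proof -
  have "(q$1)^2 + (q$2)^2 + (q$3)^2 = 1" using assms(1) by (simp add: S2_def norm3_eq_1)
  moreover have "h$1*q$1 + h$2*q$2 + h$3*q$3 = 0" using assms(2) by (simp add: tang_def inner3)
  ultimately show ?thesis
    unfolding vec3_eq_iff dirD_def tgD_def by (simp add: inner3) algebra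
qed

lemma linear_tangent_frame:
  assumes lin: "linear L" and q: "q \<in> S2" and h: "h \<in> tang q"
  shows "(1 - (q$2)^2) *\<^sub>R L h = (h \<bullet> dirD q) *\<^sub>R L (dirD q) + (h$2) *\<^sub>R L (tgD q)"
proof -
  have "(1 - (q$2)^2) *\<^sub>R L h = L ((1 - (q$2)^2) *\<^sub>R h)" using linear_cmul[OF lin] by simp
  also have "\<dots> = L ((h \<bullet> dirD q) *\<^sub>R dirD q + (h$2) *\<^sub>R tgD q)"
    using tangent_frame_decomp[OF q h] by simp
  also have "\<dots> = (h \<bullet> dirD q) *\<^sub>R L (dirD q) + (h$2) *\<^sub>R L (tgD q)"
    using linear_add[OF lin] linear_cmul[OF lin] by simp
  finally show ?thesis .
qed

text \<open>Trace and determinant of a linear map restricted to the tangent plane, computed in this frame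
  (both up to a positive factor, which is irrelevant for their vanishing).\<close>
definition tan_trace :: "(real^3 \<Rightarrow> real^3) \<Rightarrow> real^3 \<Rightarrow> real" where
  "tan_trace L q = L (dirD q) \<bullet> dirD q + L (tgD q) $ 2"

definition tan_det :: "(real^3 \<Rightarrow> real^3) \<Rightarrow> real^3 \<Rightarrow> real" where
  "tan_det L q = (L (dirD q) \<bullet> dirD q) * (L (tgD q) $ 2) - (L (tgD q) \<bullet> dirD q) * (L (dirD q) $ 2)"

lemma non_hyperbolic_tangent:
  fixes L :: "real^3 \<Rightarrow> real^3"
  assumes lin: "linear L" and q: "q \<in> S2" "\<bar>q$2\<bar> < 1"
    and w: "w1 \<in> tang q" "w2 \<in> tang q" "w1 \<noteq> 0 \<or> w2 \<noteq> 0"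
    and eig: "L w1 = (-\<mu>) *\<^sub>R w2" "L w2 = \<mu> *\<^sub>R w1"
  shows "tan_det L q = 0 \<or> tan_trace L q = 0"
proof -
  define f g where "f = dirD q" and "g = tgD q"
  define r where "r = 1 - (q$2)^2"
  have r_pos: "r > 0" unfolding r_def using q(2)
    by (simp add: abs_square_less_1)
  have L_frame: "r *\<^sub>R L h = (h \<bullet> f) *\<^sub>R L f + (h$2) *\<^sub>R L g" if "h \<in> tang q" for h
    using linear_tangent_frame[OF lin q(1) that] unfolding r_def f_def g_def .
  have E1: "r *\<^sub>R ((-\<mu>) *\<^sub>R w2) = (w1 \<bullet> f) *\<^sub>R L f + (w1$2) *\<^sub>R L g"
    using L_frame[OF w(1)] eig by simp
  have E2: "r *\<^sub>R (\<mu> *\<^sub>R w1) = (w2 \<bullet> f) *\<^sub>R L f + (w2$2) *\<^sub>R L g"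
    using L_frame[OF w(2)] eig by simp
  have i1: "(L f \<bullet> f)*(w1 \<bullet> f) + (L g \<bullet> f)*(w1$2) = -(\<mu>*r)*(w2 \<bullet> f)"
    using arg_cong[OF E1, of "\<lambda>v. v \<bullet> f"] by (simp add: inner_add_left algebra_simps)
  have i2: "(L f $ 2)*(w1 \<bullet> f) + (L g $ 2)*(w1$2) = -(\<mu>*r)*(w2$2)"
    using arg_cong[OF E1, of "\<lambda>v. v $ 2"] by (simp add: algebra_simps)
  have i3: "(L f \<bullet> f)*(w2 \<bullet> f) + (L g \<bullet> f)*(w2$2) = (\<mu>*r)*(w1 \<bullet> f)"
    using arg_cong[OF E2, of "\<lambda>v. v \<bullet> f"] by (simp add: inner_add_left algebra_simps)
  have i4: "(L f $ 2)*(w2 \<bullet> f) + (L g $ 2)*(w2$2) = (\<mu>*r)*(w1$2)"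
    using arg_cong[OF E2, of "\<lambda>v. v $ 2"] by (simp add: algebra_simps)
  have "w1 \<bullet> f \<noteq> 0 \<or> w1$2 \<noteq> 0 \<or> w2 \<bullet> f \<noteq> 0 \<or> w2$2 \<noteq> 0"
  proof (rule ccontr)
    assume "\<not> ?thesis"
    then have "r *\<^sub>R w1 = 0" "r *\<^sub>R w2 = 0"
      using tangent_frame_decomp[OF q(1) w(1)] tangent_frame_decomp[OF q(1) w(2)]
      unfolding r_def f_def by auto
    then show False using r_pos w(3) by simp
  qed
  from imaginary_eigenvalue_2x2[OF i1 i2 i3 i4 this] show ?thesis
    unfolding tan_det_def tan_trace_def f_def g_def .
qed

definition dmix :: "nat \<Rightarrow> real \<Rightarrow> pvf \<Rightarrow> pvf \<Rightarrow> real^3 \<Rightarrow> real^3 \<Rightarrow> real^3" where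
  "dmix m s X Y q h = (1 - s) *\<^sub>R dpoinc m Y q h + s *\<^sub>R dpoinc m X q h"

definition jump :: "nat \<Rightarrow> pvf \<Rightarrow> pvf \<Rightarrow> real^3 \<Rightarrow> real^3" where
  "jump m X Y q = poinc m X q - poinc m Y q"

definition dreg :: "nat \<Rightarrow> (real \<Rightarrow> real) \<Rightarrow> real \<Rightarrow> pvf \<Rightarrow> pvf \<Rightarrow> real^3 \<Rightarrow> real^3 \<Rightarrow> real^3" where
  "dreg m \<phi> \<epsilon> X Y q h = dmix m (\<phi> (q$2/\<epsilon>)) X Y q h
     + (deriv \<phi> (q$2/\<epsilon>) * (h$2/\<epsilon>)) *\<^sub>R jump m X Y q"

lemma reg_deriv:
  assumes "transition_fun \<phi>"
  shows "(reg_field m \<phi> \<epsilon> X Y has_derivative dreg m \<phi> \<epsilon> X Y q) (at q)"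
proof -
  have "((\<lambda>q::real^3. q$2/\<epsilon>) has_derivative (\<lambda>h. h$2/\<epsilon>)) (at q)"
    by (rule bounded_linear_imp_has_derivative
        [OF bounded_linear_compose[OF bounded_linear_divide bounded_linear_vec_nth]])
  moreover have "(\<phi> has_derivative (\<lambda>x. deriv \<phi> (q$2/\<epsilon>) * x)) (at (q$2/\<epsilon>))"
    using transition_fun_deriv(1)[OF assms] by (simp add: has_field_derivative_def)
  ultimately have scaled:
    "((\<lambda>q::real^3. \<phi> (q$2/\<epsilon>)) has_derivative (\<lambda>h. deriv \<phi> (q$2/\<epsilon>) * (h$2/\<epsilon>))) (at q)"
    using has_derivative_compose by fastforce
  have "reg_field m \<phi> \<epsilon> X Y =
      (\<lambda>q. (1 - \<phi> (q$2/\<epsilon>)) *\<^sub>R poinc m Y q + \<phi> (q$2/\<epsilon>) *\<^sub>R poinc m X q)"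
    by (rule ext) (simp add: reg_field_def)
  then show ?thesis unfolding dreg_def dmix_def jump_def
    by (simp only:) (rule derivative_eq_intros scaled poinc_deriv refl | simp add: algebra_simps)+
qed

lemma hyp_sing_iff_derivative:
  assumes "(F has_derivative F') (at p)"
  shows "hyp_sing F p \<longleftrightarrow> F p = 0 \<and>
     \<not> (\<exists>\<mu> w1 w2. w1 \<in> tang p \<and> w2 \<in> tang p \<and> (w1 \<noteq> 0 \<or> w2 \<noteq> 0) \<and>
          F' w1 = (- \<mu>) *\<^sub>R w2 \<and> F' w2 = \<mu> *\<^sub>R w1)"
  using frechet_derivative_at[OF assms] differentiableI[OF assms] unfolding hyp_sing_def by auto

lemma reg_non_hyperbolic_tangent:
  assumes \<phi>: "transition_fun \<phi>" and q: "q \<in> S2" "\<bar>q$2\<bar> < 1"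
    and zero: "reg_field m \<phi> \<epsilon> X Y q = 0" and non_hyp: "\<not> hyp_sing (reg_field m \<phi> \<epsilon> X Y) q"
  shows "tan_det (dreg m \<phi> \<epsilon> X Y q) q = 0 \<or> tan_trace (dreg m \<phi> \<epsilon> X Y q) q = 0"
proof -
  note der = reg_deriv[OF \<phi>, of m \<epsilon> X Y q]
  obtain \<mu> w1 w2 where "w1 \<in> tang q" "w2 \<in> tang q" "w1 \<noteq> 0 \<or> w2 \<noteq> 0"
      "dreg m \<phi> \<epsilon> X Y q w1 = (- \<mu>) *\<^sub>R w2" "dreg m \<phi> \<epsilon> X Y q w2 = \<mu> *\<^sub>R w1"
    using zero non_hyp unfolding hyp_sing_iff_derivative[OF der] by blast
  then show ?thesis
    using non_hyperbolic_tangent[OF has_derivative_linear[OF der] q] by blast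
qed

text \<open>Away from the strip \<open>|y| < \<epsilon>\<close> the regularised field and its derivative agree with \<open>\<P>(X)\<close>
  (for \<open>y > 0\<close>) or \<open>\<P>(Y)\<close> (for \<open>y < 0\<close>), whose singular points are hyperbolic by \<open>G\<^sub>m(1)\<close>.\<close>
lemma reg_hyperbolic_off_strip:
  assumes G: "Gm1 m X Y" and \<phi>: "transition_fun \<phi>"
    and \<epsilon>: "0 < \<epsilon>" and q: "q \<in> S2" "\<epsilon> \<le> \<bar>q$2\<bar>" and zero: "reg_field m \<phi> \<epsilon> X Y q = 0"
  shows "hyp_sing (reg_field m \<phi> \<epsilon> X Y) q"
proof -
  have flat: "deriv \<phi> (q$2/\<epsilon>) = 0"
    using q(2) \<epsilon> by (intro transition_fun_deriv_outside[OF \<phi>]) (simp add: abs_div)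
  have same_field: "hyp_sing (reg_field m \<phi> \<epsilon> X Y) q \<longleftrightarrow> hyp_sing (poinc m Z) q"
    if "reg_field m \<phi> \<epsilon> X Y q = poinc m Z q" "dreg m \<phi> \<epsilon> X Y q = dpoinc m Z q" for Z
    unfolding hyp_sing_iff_derivative[OF reg_deriv[OF \<phi>]] hyp_sing_iff_derivative[OF poinc_deriv]
      that ..
  show ?thesis
  proof (cases "q$2 > 0")
    case True
    then have "\<phi> (q$2/\<epsilon>) = 1"
      using q(2) \<epsilon> \<phi> unfolding transition_fun_def by simp
    then have "reg_field m \<phi> \<epsilon> X Y q = poinc m X q" "dreg m \<phi> \<epsilon> X Y q = dpoinc m X q"
      using flat by (simp_all add: reg_field_def dreg_def dmix_def fun_eq_iff)
    moreover have "q \<in> S2 \<inter> Nset" using q True by (simp add: Nset_def)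
    ultimately show ?thesis
      using G zero same_field unfolding Gm1_def Sm_cond_def by auto
  next
    case False
    then have "q$2 \<le> -\<epsilon>" "q$2 < 0" using q(2) \<epsilon> by auto
    then have "\<phi> (q$2/\<epsilon>) = 0"
      using \<epsilon> \<phi> unfolding transition_fun_def by (simp add: divide_le_eq)
    then have "reg_field m \<phi> \<epsilon> X Y q = poinc m Y q" "dreg m \<phi> \<epsilon> X Y q = dpoinc m Y q"
      using flat by (simp_all add: reg_field_def dreg_def dmix_def fun_eq_iff)
    moreover have "q \<in> S2 \<inter> Sset" using q \<open>q$2 < 0\<close> by (simp add: Sset_def)
    ultimately show ?thesis
      using G zero same_field unfolding Gm1_def Sm_cond_def by auto
  qed
qed

section \<open>Consequences of \<open>G\<^sub>m(1)\<close> on the discontinuity circle\<close>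

text \<open>Neither \<open>\<P>(X)\<close> nor \<open>\<P>(Y)\<close> vanishes on \<open>D\<close>: such a point would be a \<open>D\<close>-singularity that is
  neither a fold nor a hyperbolic singular point of the Filippov field.\<close>
lemma poinc_nonzero_on_D:
  assumes G: "Gm1 m X Y" and p: "p \<in> S2" "p$2 = 0"
  shows "poinc m X p \<noteq> 0" and "poinc m Y p \<noteq> 0"
proof -
  let ?U = "poinc m X" and ?V = "poinc m Y"
  have not_elementary: "\<not> fold_pt ?U ?V p \<and> \<not> hypF_pt ?U ?V p"
    if "?U p = 0 \<or> ?V p = 0"
    using that U2f_zero_at_singularity[of m X p] U2f_zero_at_singularity[of m Y p]
    by (auto simp: fold_pt_def hypF_pt_def Uf_def)
  have sing: "D_sing ?U ?V p" if "?U p = 0 \<or> ?V p = 0"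
    using that p by (auto simp: D_sing_def D_regular_def Dset_def Uf_def)
  have "fold_pt ?U ?V p \<or> hypF_pt ?U ?V p" if "?U p = 0 \<or> ?V p = 0"
    using G sing[OF that] unfolding Gm1_def by blast
  then show "?U p \<noteq> 0" "?V p \<noteq> 0" using not_elementary by blast+
qed

text \<open>A point of \<open>D\<close> where a proper convex combination of \<open>\<P>(Y)\<close> and \<open>\<P>(X)\<close> vanishes is a
  \<open>D\<close>-singularity (the two fields are parallel and point to opposite sides of \<open>D\<close>, or are both
  tangent to it) that is not a fold; hence it is a hyperbolic singular point of the Filippov field.\<close>
lemma sliding_equilibrium_hypF:
  assumes G: "Gm1 m X Y" and p: "p \<in> S2" "p$2 = 0"
    and s: "0 < s" "s < 1" and rel: "(1 - s) *\<^sub>R poinc m Y p + s *\<^sub>R poinc m X p = 0"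
  shows "hypF_pt (poinc m X) (poinc m Y) p"
proof -
  let ?U = "poinc m X" and ?V = "poinc m Y"
  define u v where "u = ?U p" and "v = ?V p"
  have r2: "(1-s) * v$2 + s * u$2 = 0" using arg_cong[OF rel, of "\<lambda>w. w$2"] by (simp add: u_def v_def)
  have "u$2 * v$2 \<le> 0"
  proof -
    have "(1-s) * (u$2 * v$2) = - s * (u$2 * u$2)" using r2 by algebra
    moreover have "- s * (u$2 * u$2) \<le> 0" using s by (simp add: mult_nonneg_nonneg)
    ultimately have "(1-s) * (u$2 * v$2) \<le> 0" by simp
    moreover have "u$2 * v$2 > 0 \<Longrightarrow> (1-s) * (u$2 * v$2) > 0" using s by simp
    ultimately show ?thesis by linarith
  qed
  moreover have "detUV ?U ?V p = 0"
  proof -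
    define J where "J = u - v"
    have uJ: "u = (1-s) *\<^sub>R J" and vJ: "v = (-s) *\<^sub>R J"
      using rel by (simp_all add: J_def u_def v_def vec3_eq_iff algebra_simps)
    show ?thesis unfolding detUV_def Let_def u_def[symmetric] v_def[symmetric] uJ vJ
      by (simp add: algebra_simps)
  qed
  ultimately have "D_sing ?U ?V p"
    using p by (auto simp: D_sing_def D_regular_def Dset_def Uf_def u_def v_def)
  moreover have "\<not> fold_pt ?U ?V p"
    using r2 s by (auto simp: fold_pt_def Uf_def u_def v_def)
  ultimately show ?thesis using G unfolding Gm1_def by blast
qed

text \<open>The quantity governing the blow-up: \<open>sliding_det A J p\<close> is the leading coefficient of the
  tangent determinant of \<open>h \<mapsto> A h + k h\<^sub>y J\<close> as \<open>k \<rightarrow> \<infinity>\<close>.\<close>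
definition sliding_det :: "(real^3 \<Rightarrow> real^3) \<Rightarrow> real^3 \<Rightarrow> real^3 \<Rightarrow> real" where
  "sliding_det A J p = (A (dirD p) \<bullet> dirD p) * J$2 - (J \<bullet> dirD p) * A (dirD p) $ 2"

lemma ddet_parallel_on_D:
  assumes "p$2 = 0"
  shows "ddet p (dirD p) ((1-s) *\<^sub>R J) ((-s) *\<^sub>R J) du dv
    = - ((((1-s) *\<^sub>R dv + s *\<^sub>R du) \<bullet> dirD p) * J$2
         - (J \<bullet> dirD p) * ((1-s) *\<^sub>R dv + s *\<^sub>R du)$2)"
  using assms unfolding ddet_def dirD_def by (simp add: inner3 algebra_simps)

text \<open>At a sliding equilibrium the jump is transversal to \<open>D\<close> and \<open>sliding_det\<close> does not vanish
  (this is the nondegeneracy of \<open>det[U, V]|\<^sub>D\<close>).\<close>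
lemma sliding_equilibrium_transversal:
  assumes G: "Gm1 m X Y" and p: "p \<in> S2" "p$2 = 0"
    and s: "0 < s" "s < 1" and rel: "(1 - s) *\<^sub>R poinc m Y p + s *\<^sub>R poinc m X p = 0"
  shows "jump m X Y p $ 2 \<noteq> 0" and "sliding_det (dmix m s X Y p) (jump m X Y p) p \<noteq> 0"
proof -
  let ?U = "poinc m X" and ?V = "poinc m Y"
  have hF: "hypF_pt ?U ?V p" by (rule sliding_equilibrium_hypF[OF G p s rel])
  then have "?U p $ 2 * ?V p $ 2 < 0" unfolding hypF_pt_def Uf_def by simp
  then show "jump m X Y p $ 2 \<noteq> 0" unfolding jump_def by (auto simp: mult_less_0_iff)
  define J where "J = jump m X Y p"
  have uJ: "?U p = (1-s) *\<^sub>R J" and vJ: "?V p = (-s) *\<^sub>R J"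
    using rel by (simp_all add: J_def jump_def vec3_eq_iff algebra_simps)
  have "frechet_derivative (detUV ?U ?V) (at p) (dirD p)
      = ddet p (dirD p) (?U p) (?V p) (dpoinc m X p (dirD p)) (dpoinc m Y p (dirD p))"
    using frechet_derivative_at[OF det_deriv[of m X Y p]] by metis
  also have "\<dots> = - sliding_det (dmix m s X Y p) J p"
    unfolding uJ vJ ddet_parallel_on_D[OF p(2)] sliding_det_def dmix_def ..
  finally show "sliding_det (dmix m s X Y p) (jump m X Y p) p \<noteq> 0"
    using hF unfolding hypF_pt_def J_def by simp
qed

section \<open>The blow-up argument near the discontinuity circle\<close>

lemma strip_witness_sequence:
  fixes B :: "real \<Rightarrow> real^3 \<Rightarrow> bool"
  assumes bad: "\<forall>\<epsilon>0>0. \<exists>\<epsilon> q. 0 < \<epsilon> \<and> \<epsilon> \<le> \<epsilon>0 \<and> q \<in> S2 \<and> \<bar>q$2\<bar> < \<epsilon> \<and> B \<epsilon> q"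
  obtains e q where
    "\<And>n. B (e n) (q n) \<and> 0 < e n \<and> e n < 1 \<and> q n \<in> S2 \<and> \<bar>q n $ 2\<bar> < e n" "e \<longlonglongrightarrow> 0"
proof -
  define bound where "bound n = inverse (real (Suc (Suc n)))" for n
  have bound_lim: "bound \<longlonglongrightarrow> 0"
    unfolding bound_def using LIMSEQ_Suc[OF LIMSEQ_inverse_real_of_nat] .
  have bound_small: "bound n < 1" for n
    unfolding bound_def by (simp add: inverse_less_1_iff)
  have "\<forall>n. \<exists>z. 0 < fst z \<and> fst z \<le> bound n \<and> snd z \<in> S2 \<and> \<bar>snd z $ 2\<bar> < fst z \<and> B (fst z) (snd z)"
    using bad by (simp add: bound_def)
  then obtain Z where Z: "\<forall>n. 0 < fst (Z n) \<and> fst (Z n) \<le> bound n \<and> snd (Z n) \<in> S2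
      \<and> \<bar>snd (Z n) $ 2\<bar> < fst (Z n) \<and> B (fst (Z n)) (snd (Z n))"
    by (rule choice[THEN exE])
  have "fst (Z n) < 1" for n using Z bound_small[of n] by (meson le_less_trans)
  moreover have "(fst \<circ> Z) \<longlonglongrightarrow> 0"
    by (rule tendsto_sandwich[OF _ _ tendsto_const bound_lim])
       (use Z in \<open>auto intro: less_imp_le always_eventually\<close>)
  ultimately show ?thesis using that[of "fst \<circ> Z" "snd \<circ> Z"] Z by simp
qed

lemma strip_sequence_compactness:
  fixes B :: "real \<Rightarrow> real^3 \<Rightarrow> bool"
  assumes bad: "\<forall>\<epsilon>0>0. \<exists>\<epsilon> q. 0 < \<epsilon> \<and> \<epsilon> \<le> \<epsilon>0 \<and> q \<in> S2 \<and> \<bar>q$2\<bar> < \<epsilon> \<and> B \<epsilon> q"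
  obtains e q p t0 where
    "\<And>n. B (e n) (q n) \<and> 0 < e n \<and> e n < 1 \<and> q n \<in> S2 \<and> \<bar>q n $ 2\<bar> < e n"
    "e \<longlonglongrightarrow> 0" "q \<longlonglongrightarrow> p" "(\<lambda>n. q n $ 2 / e n) \<longlonglongrightarrow> t0"
    "p \<in> S2" "p $ 2 = 0" "\<bar>t0\<bar> \<le> 1"
proof -
  obtain E Q where EQ: "\<And>n. B (E n) (Q n) \<and> 0 < E n \<and> E n < 1 \<and> Q n \<in> S2 \<and> \<bar>Q n $ 2\<bar> < E n"
    and E_lim: "E \<longlonglongrightarrow> 0"
    by (rule strip_witness_sequence[OF bad]) blast
  have "S2 = sphere 0 1" by (auto simp: S2_def)
  then have K: "compact (S2 \<times> {-1..1::real})"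
    using compact_Times compact_sphere compact_Icc by metis
  have "(Q n, Q n $ 2 / E n) \<in> S2 \<times> {-1..1}" for n
  proof -
    have "-1 < Q n $ 2 / E n" "Q n $ 2 / E n < 1"
      using EQ[of n] by (simp_all add: less_divide_eq divide_less_eq abs_less_iff)
    then show ?thesis using EQ[of n] by simp
  qed
  then have "\<forall>n. (Q n, Q n $ 2 / E n) \<in> S2 \<times> {-1..1}" ..
  then obtain l r where l: "l \<in> S2 \<times> {-1..1}" "strict_mono r"
      "((\<lambda>n. (Q n, Q n $ 2 / E n)) \<circ> r) \<longlonglongrightarrow> l"
    by (rule seq_compactE[OF compact_imp_seq_compact[OF K]])
  obtain p t0 where l_eq: "l = (p, t0)" by (cases l)
  have q_lim: "(Q \<circ> r) \<longlonglongrightarrow> p" and t_lim: "(\<lambda>n. (Q \<circ> r) n $ 2 / (E \<circ> r) n) \<longlonglongrightarrow> t0"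
    using tendsto_fst[OF l(3)] tendsto_snd[OF l(3)] by (simp_all add: l_eq o_def)
  have e_lim: "(E \<circ> r) \<longlonglongrightarrow> 0" by (rule LIMSEQ_subseq_LIMSEQ[OF E_lim l(2)])
  have "(\<lambda>n. (Q \<circ> r) n $ 2) \<longlonglongrightarrow> 0"
  proof (rule tendsto_sandwich[of "\<lambda>n. - (E \<circ> r) n" _ _ "E \<circ> r"])
    have "- E n \<le> Q n $ 2 \<and> Q n $ 2 \<le> E n" for n using EQ[of n] by auto
    then show "\<forall>\<^sub>F n in sequentially. - (E \<circ> r) n \<le> (Q \<circ> r) n $ 2"
      "\<forall>\<^sub>F n in sequentially. (Q \<circ> r) n $ 2 \<le> (E \<circ> r) n"
      by (simp_all add: always_eventually)
  qed (use e_lim tendsto_minus[OF e_lim] in auto)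
  moreover have "(\<lambda>n. (Q \<circ> r) n $ 2) \<longlonglongrightarrow> p $ 2" by (intro tendsto_intros q_lim)
  ultimately have "p $ 2 = 0" using LIMSEQ_unique by blast
  then show ?thesis
    using that[OF _ e_lim q_lim t_lim] EQ l(1) l_eq by auto
qed

text \<open>The limit of zeros of the regularised fields is a sliding equilibrium: the limit of the
  rescaled heights lies in \<open>(-1, 1)\<close> because neither field vanishes on \<open>D\<close>.\<close>
lemma sliding_limit:
  assumes G: "Gm1 m X Y" and \<phi>: "transition_fun \<phi>"
    and zero: "\<And>n. reg_field m \<phi> (e n) X Y (q n) = 0"
    and q_lim: "q \<longlonglongrightarrow> p" and t_lim: "(\<lambda>n. q n $ 2 / e n) \<longlonglongrightarrow> t0"
    and p: "p \<in> S2" "p $ 2 = 0" and t0: "\<bar>t0\<bar> \<le> 1"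
  shows "(1 - \<phi> t0) *\<^sub>R poinc m Y p + \<phi> t0 *\<^sub>R poinc m X p = 0" and "-1 < t0 \<and> t0 < 1"
proof -
  have "isCont \<phi> t0" using transition_fun_deriv(1)[OF \<phi>] DERIV_isCont by blast
  then have "(\<lambda>n. reg_field m \<phi> (e n) X Y (q n))
      \<longlonglongrightarrow> (1 - \<phi> t0) *\<^sub>R poinc m Y p + \<phi> t0 *\<^sub>R poinc m X p"
    unfolding reg_field_def
    by (intro tendsto_intros poinc_tendsto q_lim isCont_tendsto_compose[OF _ t_lim])
  moreover have "(\<lambda>n. reg_field m \<phi> (e n) X Y (q n)) = (\<lambda>n. 0)" using zero by simp
  ultimately show rel: "(1 - \<phi> t0) *\<^sub>R poinc m Y p + \<phi> t0 *\<^sub>R poinc m X p = 0"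
    using LIMSEQ_unique[OF tendsto_const] by metis
  have "t0 \<noteq> -1"
  proof
    assume "t0 = -1"
    then have "\<phi> t0 = 0" using \<phi> unfolding transition_fun_def by simp
    then show False using rel poinc_nonzero_on_D(2)[OF G p] by simp
  qed
  moreover have "t0 \<noteq> 1"
  proof
    assume "t0 = 1"
    then have "\<phi> t0 = 1" using \<phi> unfolding transition_fun_def by simp
    then show False using rel poinc_nonzero_on_D(1)[OF G p] by simp
  qed
  ultimately show "-1 < t0 \<and> t0 < 1" using t0 by (auto simp: abs_le_iff)
qed

lemma dirD_tendsto:
  assumes "(q \<longlongrightarrow> p) F"
  shows "((\<lambda>n. dirD (q n)) \<longlongrightarrow> dirD p) F"
proof -
  have "dirD x = (x$3) *\<^sub>R vector [1,0,0] - (x$1) *\<^sub>R vector [0,0,1]" for x :: "real^3"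
    by (simp add: dirD_def vec3_eq_iff)
  then show ?thesis by (simp only:) (intro tendsto_intros assms)
qed

lemma rescaled_tangent_limits:
  fixes L A :: "nat \<Rightarrow> real^3 \<Rightarrow> real^3"
  assumes L: "\<And>n h. L n h = A n h + (k n * h$2) *\<^sub>R J n"
    and k: "\<And>n. k n > 0" "(\<lambda>n. inverse (k n)) \<longlonglongrightarrow> 0"
    and q_lim: "q \<longlonglongrightarrow> p" and p: "p $ 2 = 0"
    and a: "(\<lambda>n. A n (dirD (q n))) \<longlonglongrightarrow> a" and b: "(\<lambda>n. A n (tgD (q n))) \<longlonglongrightarrow> b"
    and J: "J \<longlonglongrightarrow> J0"
  shows "(\<lambda>n. tan_trace (L n) (q n) * inverse (k n)) \<longlonglongrightarrow> J0 $ 2"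
    and "(\<lambda>n. tan_det (L n) (q n) * inverse (k n)) \<longlonglongrightarrow> (a \<bullet> dirD p) * J0$2 - (J0 \<bullet> dirD p) * a$2"
proof -
  define f g where "f n = dirD (q n)" and "g n = tgD (q n)" for n
  have f_lim: "f \<longlonglongrightarrow> dirD p" unfolding f_def by (rule dirD_tendsto[OF q_lim])
  have g2_lim: "(\<lambda>n. g n $ 2) \<longlonglongrightarrow> 1"
  proof -
    have "(\<lambda>n. 1 - q n $ 2 * q n $ 2) \<longlonglongrightarrow> 1 - p$2 * p$2"
      by (intro tendsto_intros q_lim)
    then show ?thesis using p by (simp add: g_def tgD_def)
  qed
  have Lf: "L n (f n) = A n (f n)" for n by (simp add: L f_def dirD_def)
  have trace_eq: "tan_trace (L n) (q n) * inverse (k n)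
      = (A n (f n) \<bullet> f n) * inverse (k n) + A n (g n) $ 2 * inverse (k n) + g n $ 2 * J n $ 2" for n
    using k(1)[of n] unfolding tan_trace_def f_def[symmetric] g_def[symmetric] Lf
    by (simp add: L field_simps)
  have det_eq: "tan_det (L n) (q n) * inverse (k n)
      = (A n (f n) \<bullet> f n) * (A n (g n) $ 2 * inverse (k n) + g n $ 2 * J n $ 2)
        - ((A n (g n) \<bullet> f n) * inverse (k n) + g n $ 2 * (J n \<bullet> f n)) * A n (f n) $ 2" for n
    using k(1)[of n] unfolding tan_det_def f_def[symmetric] g_def[symmetric] Lf
    by (simp add: L field_simps inner_add_left)
  have "(\<lambda>n. (A n (f n) \<bullet> f n) * inverse (k n) + A n (g n) $ 2 * inverse (k n) + g n $ 2 * J n $ 2)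
      \<longlonglongrightarrow> (a \<bullet> dirD p) * 0 + b $ 2 * 0 + 1 * J0 $ 2"
    using a b unfolding f_def[symmetric] g_def[symmetric]
    by (intro tendsto_intros f_lim g2_lim k(2) J)
  then show "(\<lambda>n. tan_trace (L n) (q n) * inverse (k n)) \<longlonglongrightarrow> J0 $ 2"
    unfolding trace_eq by simp
  have "(\<lambda>n. (A n (f n) \<bullet> f n) * (A n (g n) $ 2 * inverse (k n) + g n $ 2 * J n $ 2)
        - ((A n (g n) \<bullet> f n) * inverse (k n) + g n $ 2 * (J n \<bullet> f n)) * A n (f n) $ 2)
      \<longlonglongrightarrow> (a \<bullet> dirD p) * (b $ 2 * 0 + 1 * J0 $ 2) - ((b \<bullet> dirD p) * 0 + 1 * (J0 \<bullet> dirD p)) * a $ 2"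
    using a b unfolding f_def[symmetric] g_def[symmetric]
    by (intro tendsto_intros f_lim g2_lim k(2) J)
  then show "(\<lambda>n. tan_det (L n) (q n) * inverse (k n)) \<longlonglongrightarrow> (a \<bullet> dirD p) * J0$2 - (J0 \<bullet> dirD p) * a$2"
    unfolding det_eq by simp
qed

lemma reg_derivative_blowup:
  assumes \<phi>: "transition_fun \<phi>"
    and seq: "\<And>n. 0 < e n \<and> \<bar>q n $ 2\<bar> < e n"
    and e_lim: "e \<longlonglongrightarrow> 0" and q_lim: "q \<longlonglongrightarrow> p" and t_lim: "(\<lambda>n. q n $ 2 / e n) \<longlonglongrightarrow> t0"
    and p: "p $ 2 = 0" and t0: "-1 < t0" "t0 < 1"
  defines "k \<equiv> \<lambda>n. deriv \<phi> (q n $ 2 / e n) / e n"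
  shows "(\<lambda>n. tan_trace (dreg m \<phi> (e n) X Y (q n)) (q n) * inverse (k n)) \<longlonglongrightarrow> jump m X Y p $ 2"
    and "(\<lambda>n. tan_det (dreg m \<phi> (e n) X Y (q n)) (q n) * inverse (k n))
           \<longlonglongrightarrow> sliding_det (dmix m (\<phi> t0) X Y p) (jump m X Y p) p"
proof -
  define t where "t n = q n $ 2 / e n" for n
  have L: "dreg m \<phi> (e n) X Y (q n) h
      = dmix m (\<phi> (t n)) X Y (q n) h + (k n * h$2) *\<^sub>R jump m X Y (q n)" for n h
    by (simp add: dreg_def k_def t_def)
  have "-1 < t n \<and> t n < 1" for n
    using seq[of n] by (simp add: t_def less_divide_eq divide_less_eq abs_less_iff)
  then have k_pos: "k n > 0" for n
    using seq[of n] \<phi> unfolding transition_fun_def k_def t_def by simp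
  have "deriv \<phi> t0 > 0" using t0 \<phi> unfolding transition_fun_def by simp
  then have "(\<lambda>n. e n / deriv \<phi> (t n)) \<longlonglongrightarrow> 0 / deriv \<phi> t0"
    using isCont_tendsto_compose[OF transition_fun_deriv(2)[OF \<phi>] t_lim]
    by (intro tendsto_intros e_lim) (simp_all add: t_def)
  then have k_lim: "(\<lambda>n. inverse (k n)) \<longlonglongrightarrow> 0" by (simp add: k_def t_def)
  have s_lim: "(\<lambda>n. \<phi> (t n)) \<longlonglongrightarrow> \<phi> t0"
    using isCont_tendsto_compose[OF DERIV_isCont[OF transition_fun_deriv(1)[OF \<phi>]] t_lim]
    by (simp add: t_def)
  have dmix_lim: "(\<lambda>n. dmix m (\<phi> (t n)) X Y (q n) (H n)) \<longlonglongrightarrow> dmix m (\<phi> t0) X Y p h"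
    if "H \<longlonglongrightarrow> h" for H h
    unfolding dmix_def by (intro tendsto_intros dpoinc_tendsto s_lim q_lim that)
  have tgD_lim: "(\<lambda>n. tgD (q n)) \<longlonglongrightarrow> tgD p"
    unfolding tgD_def by (intro tendsto_intros q_lim)
  have jump_lim: "(\<lambda>n. jump m X Y (q n)) \<longlonglongrightarrow> jump m X Y p"
    unfolding jump_def by (intro tendsto_intros poinc_tendsto q_lim)
  note limits = rescaled_tangent_limits[where L="\<lambda>n. dreg m \<phi> (e n) X Y (q n)", OF L k_pos k_lim
      q_lim p dmix_lim[OF dirD_tendsto[OF q_lim]] dmix_lim[OF tgD_lim] jump_lim]
  show "(\<lambda>n. tan_trace (dreg m \<phi> (e n) X Y (q n)) (q n) * inverse (k n)) \<longlonglongrightarrow> jump m X Y p $ 2"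
    by (fact limits(1))
  show "(\<lambda>n. tan_det (dreg m \<phi> (e n) X Y (q n)) (q n) * inverse (k n))
      \<longlonglongrightarrow> sliding_det (dmix m (\<phi> t0) X Y p) (jump m X Y p) p"
    using limits(2) unfolding sliding_det_def .
qed

text \<open>Inside the strip \<open>|y| < \<epsilon>\<close> all zeros are hyperbolic for small \<open>\<epsilon>\<close>: otherwise the rescaled
  trace and determinant along a sequence of non-hyperbolic zeros tend to nonzero limits.\<close>
lemma reg_hyperbolic_in_strip:
  assumes G: "Gm1 m X Y" and \<phi>: "transition_fun \<phi>"
  shows "\<exists>\<epsilon>0>0. \<forall>\<epsilon>. 0 < \<epsilon> \<and> \<epsilon> \<le> \<epsilon>0 \<longrightarrow> (\<forall>q\<in>S2. \<bar>q$2\<bar> < \<epsilon> \<and>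
           reg_field m \<phi> \<epsilon> X Y q = 0 \<longrightarrow> hyp_sing (reg_field m \<phi> \<epsilon> X Y) q)"
proof (rule ccontr)
  assume "\<not> ?thesis"
  then have bad: "\<forall>\<epsilon>0>0. \<exists>\<epsilon> q. 0 < \<epsilon> \<and> \<epsilon> \<le> \<epsilon>0 \<and> q \<in> S2 \<and> \<bar>q$2\<bar> < \<epsilon> \<and>
      reg_field m \<phi> \<epsilon> X Y q = 0 \<and> \<not> hyp_sing (reg_field m \<phi> \<epsilon> X Y) q"
    by blast
  obtain e q p t0 where
    seq: "\<And>n. (reg_field m \<phi> (e n) X Y (q n) = 0 \<and> \<not> hyp_sing (reg_field m \<phi> (e n) X Y) (q n))
      \<and> 0 < e n \<and> e n < 1 \<and> q n \<in> S2 \<and> \<bar>q n $ 2\<bar> < e n"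
    and e_lim: "e \<longlonglongrightarrow> 0" and q_lim: "q \<longlonglongrightarrow> p" and t_lim: "(\<lambda>n. q n $ 2 / e n) \<longlonglongrightarrow> t0"
    and p: "p \<in> S2" "p $ 2 = 0" and t0: "\<bar>t0\<bar> \<le> 1"
    by (rule strip_sequence_compactness[OF bad]) auto
  have zero: "reg_field m \<phi> (e n) X Y (q n) = 0" for n using seq[of n] by simp
  note sliding = sliding_limit[OF G \<phi> zero q_lim t_lim p t0]
  then have s0: "0 < \<phi> t0" "\<phi> t0 < 1" using transition_fun_inside[OF \<phi>] by auto
  note transversal = sliding_equilibrium_transversal[OF G p s0 sliding(1)]
  have bounds: "0 < e n \<and> \<bar>q n $ 2\<bar> < e n" for n using seq[of n] by simp
  have t0_in: "-1 < t0" "t0 < 1" using sliding(2) by auto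
  note blowup = reg_derivative_blowup[OF \<phi> bounds e_lim q_lim t_lim p(2) t0_in, of m X Y]
  have "eventually (\<lambda>n.
      tan_trace (dreg m \<phi> (e n) X Y (q n)) (q n) * inverse (deriv \<phi> (q n $ 2 / e n) / e n) \<noteq> 0 \<and>
      tan_det (dreg m \<phi> (e n) X Y (q n)) (q n) * inverse (deriv \<phi> (q n $ 2 / e n) / e n) \<noteq> 0)
      sequentially"
    using tendsto_imp_eventually_ne[OF blowup(1) transversal(1)]
      tendsto_imp_eventually_ne[OF blowup(2) transversal(2)] by (rule eventually_conj)
  then obtain n where "tan_trace (dreg m \<phi> (e n) X Y (q n)) (q n) \<noteq> 0"
    "tan_det (dreg m \<phi> (e n) X Y (q n)) (q n) \<noteq> 0"
    unfolding eventually_sequentially by auto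
  moreover have "\<bar>q n $ 2\<bar> < 1" using seq[of n] by linarith
  ultimately show False
    using reg_non_hyperbolic_tangent[OF \<phi>] seq[of n] by blast
qed

theorem mainTheorem7:
  fixes m :: nat and X Y :: pvf and \<phi> :: "real \<Rightarrow> real"
  assumes "m \<ge> 1"
    and "Gm1 m X Y"
    and "transition_fun \<phi>"
  shows "\<exists>\<epsilon>0 > 0. \<forall>\<epsilon>. 0 < \<epsilon> \<and> \<epsilon> \<le> \<epsilon>0 \<longrightarrow>
           (\<forall>q \<in> S2. reg_field m \<phi> \<epsilon> X Y q = 0 \<longrightarrow> hyp_sing (reg_field m \<phi> \<epsilon> X Y) q)"
proof -
  obtain \<epsilon>0 where "\<epsilon>0 > 0" and near: "\<forall>\<epsilon>. 0 < \<epsilon> \<and> \<epsilon> \<le> \<epsilon>0 \<longrightarrow> (\<forall>q\<in>S2. \<bar>q$2\<bar> < \<epsilon> \<and>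
      reg_field m \<phi> \<epsilon> X Y q = 0 \<longrightarrow> hyp_sing (reg_field m \<phi> \<epsilon> X Y) q)"
    using reg_hyperbolic_in_strip[OF assms(2,3)] by blast
  moreover have "hyp_sing (reg_field m \<phi> \<epsilon> X Y) q"
    if "0 < \<epsilon> \<and> \<epsilon> \<le> \<epsilon>0" "q \<in> S2" "reg_field m \<phi> \<epsilon> X Y q = 0" for \<epsilon> q
  proof (cases "\<bar>q$2\<bar> < \<epsilon>")
    case True
    then show ?thesis using near that by blast
  next
    case False
    then show ?thesis using reg_hyperbolic_off_strip[OF assms(2,3)] that by simp
  qed
  ultimately show ?thesis by blast
qed

end
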